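(* Let $f_1,\dots,f_n:\mathbb{R}^p\to\mathbb{R}$ be continuously differentiable and $L$-smooth, let $g=\frac1n\sum_if_i\in\mathcal S(m,L)$ with $m>0$ and minimizer $x^*$, and let $i_k$ be sampled IID uniformly from $\{1,\dots,n\}$. Let $\gamma=-m$ if every $f_i\in\mathcal F(m,L)$, $\gamma=0$ if every $f_i\in\mathcal F(0,L)$, and $\gamma=L$ if the $f_i$ are only assumed $L$-smooth. Consider Finito with stepsize $\alpha>0$ and define $v^k=\frac1n\sum_{i=1}^nx_i^k-\alpha\sum_{i=1}^ny_i^k$. Given any testing rate with $1-\frac1n\le\rho^2\le1$, if there exist positive scalars $p_1,p_4$ and nonnegative scalars $\lambda_1,\lambda_2$ such that $$\alpha^2-2\lambda_2+p_1<0,$$ $$n(1-\rho^2)p_1-p_1+2\alpha^2-\frac{2\alpha^4}{\alpha^2-2\lambda_2+p_1}\le0,$$ $$n(1-\rho^2)p_4-p_4+\frac2{n^2}-\frac{2\alpha^2}{n^2(\alpha^2-2\lambda_2+p_1)}\le0,$$ $$p_4-\rho^2+2L\gamma\lambda_2-2Lm\lambda_1+1-\frac{((L+m)\lambda_1+(L-\gamma)\lambda_2-\alpha)^2}{\alpha^2-2\lambda_1-2\lambda_2+p_1}\le0,$$ then Finito with any initial $x_i^0,y_i^0\in\mathbb{R}^p$ satisfies $$\mathbb{E}\left[p_4\sum_{i=1}^n\|x_i^k-x^*\|^2+p_1\sum_{i=1}^n\|y_i^k-\nabla f_i(x^* )\|^2+\|v^k-x^*\|^2\right]\le\rho^{2k}R^0,$$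 where $R^0=p_4\sum_i\|x_i^0-x^*\|^2+p_1\sum_i\|y_i^0-\nabla f_i(x^* )\|^2+\|v^0-x^*\|^2$.
   Context: A continuously differentiable $f:\mathbb{R}^p\to\mathbb{R}$ is $L$-smooth if $\|\nabla f(x)-\nabla f(y)\|\le L\|x-y\|$; $\mathcal F(m,L)$ denotes the continuously differentiable, $L$-smooth, $m$-strongly convex functions; $\mathcal F(0,L)$ the convex $L$-smooth ones. $\mathcal S(m,L)$ is the set of continuously differentiable $g$ with a unique $x^*$ such that $\nabla g(x^* )=0$ and, for all $x$, $\begin{bmatrix}x-x^*\\\nabla g(x)\end{bmatrix}^T\begin{bmatrix}-2mLI_p&(L+m)I_p\\(L+m)I_p&-2I_p\end{bmatrix}\begin{bmatrix}x-x^*\\\nabla g(x)\end{bmatrix}\ge0$. Finito: at step $k$, $x_i^{k+1}=\frac1n\sum_{j=1}^nx_j^k-\alpha\sum_{j=1}^ny_j^k$ if $i=i_k$ and $x_i^{k+1}=x_i^k$ otherwise; then $y_i^{k+1}=\nabla f_i(x_i^{k+1})$ if $i=i_k$ and $y_i^{k+1}=y_i^k$ otherwise. Expectation is over the random indices. *)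

theory Defs
  imports "HOL-Analysis.Analysis"
begin

definition strongly_convex :: "real \<Rightarrow> ('a::real_normed_vector \<Rightarrow> real) \<Rightarrow> bool" where
  "strongly_convex m f \<longleftrightarrow>
     (\<forall>x y. \<forall>t::real. 0 \<le> t \<and> t \<le> 1 \<longrightarrow>
        f (t *\<^sub>R x + (1 - t) *\<^sub>R y) \<le> t * f x + (1 - t) * f y - m / 2 * t * (1 - t) * (norm (x - y))\<^sup>2)"

definition smooth_C1 :: "real \<Rightarrow> ('a::euclidean_space \<Rightarrow> real) \<Rightarrow> ('a \<Rightarrow> 'a) \<Rightarrow> bool" where
  "smooth_C1 L f df \<longleftrightarrow> (\<forall>x. GDERIV f x :> df x) \<and> continuous_on UNIV df \<and>
     (\<forall>x y. norm (df x - df y) \<le> L * norm (x - y))"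

definition in_S :: "real \<Rightarrow> real \<Rightarrow> ('a::euclidean_space \<Rightarrow> real) \<Rightarrow> bool" where
  "in_S m L g \<longleftrightarrow> (\<exists>dg. (\<forall>x. GDERIV g x :> dg x) \<and> continuous_on UNIV dg \<and>
     (\<exists>!xs. dg xs = 0 \<and>
        (\<forall>x. - 2 * m * L * (norm (x - xs))\<^sup>2 + 2 * (L + m) * inner (x - xs) (dg x)
               - 2 * (norm (dg x))\<^sup>2 \<ge> 0)))"

text \<open>One Finito step with sampled index j (indices 0..n-1); state = (x, y).\<close>
definition finito_step :: "nat \<Rightarrow> real \<Rightarrow> (nat \<Rightarrow> 'a \<Rightarrow> 'a) \<Rightarrow>
    (nat \<Rightarrow> 'a::real_vector) \<times> (nat \<Rightarrow> 'a) \<Rightarrow> nat \<Rightarrow> (nat \<Rightarrow> 'a) \<times> (nat \<Rightarrow> 'a)" where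
  "finito_step n \<alpha> df st j =
     (let x = fst st; y = snd st;
          v = (1 / real n) *\<^sub>R (\<Sum>i<n. x i) - \<alpha> *\<^sub>R (\<Sum>i<n. y i)
      in (x(j := v), y(j := df j v)))"

definition finito :: "nat \<Rightarrow> real \<Rightarrow> (nat \<Rightarrow> 'a \<Rightarrow> 'a) \<Rightarrow>
    (nat \<Rightarrow> 'a::real_vector) \<times> (nat \<Rightarrow> 'a) \<Rightarrow> nat list \<Rightarrow> (nat \<Rightarrow> 'a) \<times> (nat \<Rightarrow> 'a)" where
  "finito n \<alpha> df st0 js = foldl (finito_step n \<alpha> df) st0 js"

definition lyap :: "nat \<Rightarrow> real \<Rightarrow> real \<Rightarrow> real \<Rightarrow> (nat \<Rightarrow> 'a \<Rightarrow> 'a) \<Rightarrow> 'a::real_inner \<Rightarrow>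
    (nat \<Rightarrow> 'a) \<times> (nat \<Rightarrow> 'a) \<Rightarrow> real" where
  "lyap n \<alpha> p1 p4 df xs st =
     (let x = fst st; y = snd st;
          v = (1 / real n) *\<^sub>R (\<Sum>i<n. x i) - \<alpha> *\<^sub>R (\<Sum>i<n. y i)
      in p4 * (\<Sum>i<n. (norm (x i - xs))\<^sup>2) + p1 * (\<Sum>i<n. (norm (y i - df i xs))\<^sup>2)
         + (norm (v - xs))\<^sup>2)"

text \<open>Expectation over k IID uniform indices in {0..<n}: average over all n^k sequences.\<close>
definition expect_uniform :: "nat \<Rightarrow> nat \<Rightarrow> (nat list \<Rightarrow> real) \<Rightarrow> real" where
  "expect_uniform n k F =
     (\<Sum>js\<in>{js. length js = k \<and> set js \<subseteq> {..<n}}. F js) / real n ^ k"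

end

theory Submission
  imports Defs
begin

text \<open>Write \<open>a\<^sub>i = x\<^sub>i - x*\<close>, \<open>b\<^sub>i = y\<^sub>i - \<nabla>f\<^sub>i(x*)\<close>, \<open>u = v - x*\<close> and
  \<open>c\<^sub>i = \<nabla>f\<^sub>i(v) - \<nabla>f\<^sub>i(x*)\<close>. The quadratic constraint of \<open>S(m,L)\<close> relates \<open>u\<close> to the mean of
  the \<open>c\<^sub>i\<close>, and each of the three function classes yields the sector constraint
  \<open>(L - \<gamma>)\<langle>u, c\<^sub>i\<rangle> - |c\<^sub>i|\<^sup>2 + \<gamma>L|u|\<^sup>2 \<ge> 0\<close>; these are added to the Lyapunov
  decrease with the multipliers \<open>\<lambda>\<^sub>1, \<lambda>\<^sub>2\<close>. Averaging one Finito step over the \<open>n\<close>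
  possible indices and splitting every sum into mean and fluctuation, the mean part becomes a
  quadratic form in \<open>u\<close> and the mean of the \<open>c\<^sub>i\<close> that is nonpositive by the fourth
  condition, while the fluctuation part is absorbed by the first three. Hence the expected Lyapunov
  function contracts by \<open>\<rho>\<^sup>2\<close> per step.\<close>

section \<open>Inner-product identities and averages\<close>

lemma power2_norm_add: "(norm (x + y))\<^sup>2 = (norm x)\<^sup>2 + 2 * inner x y + (norm y)\<^sup>2"
  for x y :: "'a::real_inner"
  by (simp add: power2_norm_eq_inner inner_add_left inner_add_right inner_commute[of y x])

lemma power2_norm_diff: "(norm (x - y))\<^sup>2 = (norm x)\<^sup>2 - 2 * inner x y + (norm y)\<^sup>2"
  for x y :: "'a::real_inner"
  by (simp add: power2_norm_eq_inner inner_diff_left inner_diff_right inner_commute[of y x])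

lemma power2_norm_add_le: "(norm (x + y))\<^sup>2 \<le> 2 * (norm x)\<^sup>2 + 2 * (norm y)\<^sup>2"
  for x y :: "'a::real_inner"
  using zero_le_power2[of "norm (x - y)"] by (simp add: power2_norm_add power2_norm_diff)

lemma inner_quadratic_form_nonpos:
  fixes u w :: "'a::real_inner"
  assumes D: "D < 0" and disc: "E\<^sup>2 \<le> K * D"
  shows "K * (norm u)\<^sup>2 + 2 * E * inner u w + D * (norm w)\<^sup>2 \<le> 0"
proof -
  have "E\<^sup>2 * (norm u)\<^sup>2 + 2 * E * D * inner u w + D\<^sup>2 * (norm w)\<^sup>2 = (norm (E *\<^sub>R u + D *\<^sub>R w))\<^sup>2"
    by (simp add: power2_norm_add power_mult_distrib)
  then have "0 \<le> E\<^sup>2 * (norm u)\<^sup>2 + 2 * E * D * inner u w + D\<^sup>2 * (norm w)\<^sup>2"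
    by simp
  also have "\<dots> \<le> D * (K * (norm u)\<^sup>2 + 2 * E * inner u w + D * (norm w)\<^sup>2)"
    using mult_right_mono[OF disc, of "(norm u)\<^sup>2"] by (simp add: algebra_simps power2_eq_square)
  finally show ?thesis
    using D by (simp add: zero_le_mult_iff)
qed

lemma power2_norm_diff_scaleR_le:
  fixes z d :: "'a::real_inner"
  assumes "\<alpha>\<^sup>2 + P < 0"
  shows "(norm (z - \<alpha> *\<^sub>R d))\<^sup>2 + P * (norm d)\<^sup>2 \<le> (1 - \<alpha>\<^sup>2 / (\<alpha>\<^sup>2 + P)) * (norm z)\<^sup>2"
proof -
  have "(\<alpha>\<^sup>2 / (\<alpha>\<^sup>2 + P)) * (norm z)\<^sup>2 + 2 * (- \<alpha>) * inner z d + (\<alpha>\<^sup>2 + P) * (norm d)\<^sup>2 \<le> 0"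
    using assms by (intro inner_quadratic_form_nonpos) auto
  then show ?thesis
    by (simp add: power2_norm_diff power_mult_distrib algebra_simps)
qed

definition mean :: "nat \<Rightarrow> (nat \<Rightarrow> 'a::real_vector) \<Rightarrow> 'a" where
  "mean n x = (1 / real n) *\<^sub>R (\<Sum>i<n. x i)"

lemma sum_eq_scaleR_mean: "n \<ge> 1 \<Longrightarrow> (\<Sum>i<n. x i) = real n *\<^sub>R mean n x"
  by (simp add: mean_def)

lemma sum_diff_mean: "n \<ge> 1 \<Longrightarrow> (\<Sum>i<n. x i - mean n x) = 0"
  by (simp add: sum_subtractf sum_constant_scaleR mean_def)

lemma mean_diff: "mean n (\<lambda>i. x i - y i) = mean n x - mean n y"
  by (simp add: mean_def sum_subtractf scaleR_diff_right)

lemma sum_power2_norm_add_centered: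
  fixes e :: "nat \<Rightarrow> 'a::real_inner"
  assumes "(\<Sum>j<n. e j) = 0"
  shows "(\<Sum>j<n. (norm (p + e j))\<^sup>2) = real n * (norm p)\<^sup>2 + (\<Sum>j<n. (norm (e j))\<^sup>2)"
proof -
  have "(\<Sum>j<n. (norm (p + e j))\<^sup>2) = real n * (norm p)\<^sup>2 + 2 * inner p (\<Sum>j<n. e j) + (\<Sum>j<n. (norm (e j))\<^sup>2)"
    by (simp add: power2_norm_add sum.distrib inner_sum_right sum_distrib_left)
  with assms show ?thesis by simp
qed

lemma sum_power2_norm_mean_decomp:
  fixes x :: "nat \<Rightarrow> 'a::real_inner"
  assumes "n \<ge> 1"
  shows "(\<Sum>j<n. (norm (x j))\<^sup>2) = real n * (norm (mean n x))\<^sup>2 + (\<Sum>j<n. (norm (x j - mean n x))\<^sup>2)"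
  using sum_power2_norm_add_centered[OF sum_diff_mean[OF assms, of x], where p = "mean n x"] by simp

lemma mean_Lipschitz:
  fixes h :: "nat \<Rightarrow> 'a::real_normed_vector \<Rightarrow> 'b::real_normed_vector"
  assumes "n \<ge> 1" and "\<And>i. i < n \<Longrightarrow> norm (h i x - h i y) \<le> L * norm (x - y)"
  shows "norm (mean n (\<lambda>i. h i x) - mean n (\<lambda>i. h i y)) \<le> L * norm (x - y)"
proof -
  have "norm (\<Sum>i<n. h i x - h i y) \<le> (\<Sum>i<n. L * norm (x - y))"
    using assms(2) by (intro order_trans[OF norm_sum sum_mono]) auto
  then have "norm (\<Sum>i<n. h i x - h i y) / real n \<le> L * norm (x - y)"
    using assms(1) by (simp add: divide_simps mult.commute)
  moreover have "mean n (\<lambda>i. h i x) - mean n (\<lambda>i. h i y) = (1 / real n) *\<^sub>R (\<Sum>i<n. h i x - h i y)"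
    by (simp add: mean_def sum_subtractf scaleR_diff_right)
  ultimately show ?thesis
    by (simp add: divide_inverse mult.commute)
qed

section \<open>Smooth and strongly convex functions\<close>

lemma GDERIV_along_line:
  fixes f :: "'a::real_inner \<Rightarrow> real"
  assumes "\<And>x. GDERIV f x :> g x"
  shows "((\<lambda>t. f (w + t *\<^sub>R d)) has_real_derivative inner d (g (w + t *\<^sub>R d))) (at t within S)"
proof -
  have "((\<lambda>t. w + t *\<^sub>R d) has_derivative (\<lambda>h. h *\<^sub>R d)) (at t within S)"
    by (auto intro!: derivative_eq_intros)
  moreover have "(f has_derivative (\<lambda>h. inner h (g (w + t *\<^sub>R d)))) (at (w + t *\<^sub>R d))"
    using assms by (simp add: gderiv_def)
  ultimately have "((\<lambda>t. f (w + t *\<^sub>R d)) has_derivative (\<lambda>h. inner (h *\<^sub>R d) (g (w + t *\<^sub>R d)))) (at t within S)"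
    by (rule has_derivative_compose)
  moreover have "(\<lambda>h. inner (h *\<^sub>R d) (g (w + t *\<^sub>R d))) = (*) (inner d (g (w + t *\<^sub>R d)))"
    by (auto simp: fun_eq_iff)
  ultimately show ?thesis
    by (simp add: has_field_derivative_def)
qed

lemma Lipschitz_gradient_upper_bound:
  fixes f :: "'a::real_inner \<Rightarrow> real"
  assumes gd: "\<And>x. GDERIV f x :> g x"
    and lip: "\<And>x y. norm (g x - g y) \<le> L * norm (x - y)"
  shows "f z \<le> f w + inner (g w) (z - w) + L / 2 * (norm (z - w))\<^sup>2"
proof -
  define d where "d = z - w"
  define \<phi> where "\<phi> t = f (w + t *\<^sub>R d) - t * inner (g w) d - L / 2 * t\<^sup>2 * (norm d)\<^sup>2" for t
  define \<phi>' where "\<phi>' t = inner d (g (w + t *\<^sub>R d)) - inner (g w) d - L * t * (norm d)\<^sup>2" for t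
  have "(\<phi> has_real_derivative \<phi>' t) (at t)" for t
    unfolding \<phi>_def \<phi>'_def
    by (rule derivative_eq_intros GDERIV_along_line[OF gd] | simp)+
  then obtain s where s: "0 < s" "s < 1" "\<phi> 1 - \<phi> 0 = \<phi>' s"
    using MVT2[of 0 1 \<phi> \<phi>'] by auto
  have "inner d (g (w + s *\<^sub>R d)) - inner (g w) d = inner (g (w + s *\<^sub>R d) - g w) d"
    by (metis inner_commute inner_diff_left)
  also have "\<dots> \<le> norm (g (w + s *\<^sub>R d) - g w) * norm d"
    by (rule norm_cauchy_schwarz)
  also have "\<dots> \<le> L * norm (s *\<^sub>R d) * norm d"
    using lip[of "w + s *\<^sub>R d" w] by (simp add: mult_right_mono)
  also have "\<dots> = L * s * (norm d)\<^sup>2"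
    using s by (simp add: power2_eq_square)
  finally have "\<phi> 1 \<le> \<phi> 0"
    using s unfolding \<phi>'_def by simp
  then show ?thesis
    unfolding \<phi>_def d_def by (simp add: inner_commute)
qed

lemma convex_on_imp_strongly_convex_0:
  assumes "convex_on UNIV f"
  shows "strongly_convex 0 f"
  unfolding strongly_convex_def
proof (intro allI impI)
  fix x y and t :: real
  assume "0 \<le> t \<and> t \<le> 1"
  then show "f (t *\<^sub>R x + (1 - t) *\<^sub>R y) \<le> t * f x + (1 - t) * f y - 0 / 2 * t * (1 - t) * (norm (x - y))\<^sup>2"
    using convex_onD[OF assms, of t y x] by (simp add: add.commute)
qed

lemma strongly_convex_lower_bound:
  fixes f :: "'a::real_inner \<Rightarrow> real"
  assumes sc: "strongly_convex \<mu> f" and gd: "\<And>x. GDERIV f x :> g x"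
  shows "f w + inner (g w) (z - w) + \<mu> / 2 * (norm (z - w))\<^sup>2 \<le> f z"
proof -
  define d where "d = z - w"
  define Q where "Q t = f z - f w - \<mu> / 2 * (1 - t) * (norm d)\<^sup>2" for t
  have "((\<lambda>t. f (w + t *\<^sub>R d)) has_real_derivative inner d (g (w + 0 *\<^sub>R d))) (at 0 within {0<..})"
    by (rule GDERIV_along_line[OF gd])
  then have slope: "((\<lambda>t. (f (w + t *\<^sub>R d) - f w) / t) \<longlongrightarrow> inner d (g w)) (at_right 0)"
    by (simp add: has_field_derivative_iff)
  have "(Q \<longlongrightarrow> Q 0) (at_right 0)"
    unfolding Q_def by (intro tendsto_intros)
  moreover have "\<forall>\<^sub>F t in at_right 0. (f (w + t *\<^sub>R d) - f w) / t \<le> Q t"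
    unfolding eventually_at_right_field
  proof (intro exI[of _ 1] conjI allI impI)
    fix t :: real assume t: "0 < t" "t < 1"
    have "f (t *\<^sub>R z + (1 - t) *\<^sub>R w) \<le> t * f z + (1 - t) * f w - \<mu> / 2 * t * (1 - t) * (norm (z - w))\<^sup>2"
      using sc t unfolding strongly_convex_def by simp
    moreover have "w + t *\<^sub>R d = t *\<^sub>R z + (1 - t) *\<^sub>R w"
      unfolding d_def by (simp add: algebra_simps)
    ultimately have "f (w + t *\<^sub>R d) - f w \<le> t * Q t"
      unfolding Q_def d_def by (simp add: algebra_simps)
    then show "(f (w + t *\<^sub>R d) - f w) / t \<le> Q t"
      using t by (simp add: divide_le_eq mult.commute)
  qed simp
  ultimately have "inner d (g w) \<le> Q 0"
    by (intro tendsto_le[OF _ _ slope]) auto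
  then show ?thesis
    unfolding Q_def d_def by (simp add: inner_commute)
qed

lemma strongly_convex_le_Lipschitz_constant:
  fixes f :: "'a::euclidean_space \<Rightarrow> real"
  assumes "strongly_convex \<mu> f" "\<And>x. GDERIV f x :> g x"
    and "\<And>x y. norm (g x - g y) \<le> L * norm (x - y)"
  shows "\<mu> \<le> L"
proof -
  obtain e :: 'a where e: "e \<in> Basis"
    using nonempty_Basis by blast
  have "f 0 + inner (g 0) e + \<mu> / 2 * (norm e)\<^sup>2 \<le> f 0 + inner (g 0) e + L / 2 * (norm e)\<^sup>2"
    using strongly_convex_lower_bound[OF assms(1,2), of 0 e]
      Lipschitz_gradient_upper_bound[OF assms(2,3), of e 0] by simp
  then show ?thesis
    using e by simp
qed

lemma convex_smooth_gradient_gap: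
  fixes f :: "'a::real_inner \<Rightarrow> real"
  assumes lower: "\<And>w z. f w + inner (g w) (z - w) \<le> f z"
    and upper: "\<And>w z. f z \<le> f w + inner (g w) (z - w) + M / 2 * (norm (z - w))\<^sup>2"
    and M: "M > 0"
  shows "f x - f y + inner (g x) (y - x) \<le> - (1 / (2 * M)) * (norm (g y - g x))\<^sup>2"
proof -
  define \<delta> where "\<delta> = g y - g x"
  define z where "z = y - (1 / M) *\<^sub>R \<delta>"
  have "f x + inner (g x) (z - x) \<le> f y + inner (g y) (z - y) + M / 2 * (norm (z - y))\<^sup>2"
    using lower[where w = x and z = z] upper[where w = y and z = z] by linarith
  moreover have "inner (g x) (z - x) = inner (g x) (y - x) - (1 / M) * inner (g x) \<delta>"
    unfolding z_def by (simp add: inner_diff_right algebra_simps)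
  moreover have "inner (g y) (z - y) = - (1 / M) * inner (g y) \<delta>"
    unfolding z_def by (simp add: inner_diff_right)
  moreover have "M / 2 * (norm (z - y))\<^sup>2 = (1 / (2 * M)) * (norm \<delta>)\<^sup>2"
    unfolding z_def using M by (simp add: power2_eq_square field_simps)
  ultimately have "f x - f y + inner (g x) (y - x)
      \<le> (1 / (2 * M)) * (norm \<delta>)\<^sup>2 - (1 / M) * (inner (g y) \<delta> - inner (g x) \<delta>)"
    by (simp add: algebra_simps)
  also have "inner (g y) \<delta> - inner (g x) \<delta> = (norm \<delta>)\<^sup>2"
    unfolding \<delta>_def by (simp add: power2_norm_eq_inner inner_diff_left)
  finally show ?thesis
    unfolding \<delta>_def[symmetric] using M by (simp add: field_simps)
qed

lemma convex_smooth_gradient_cocoercive: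
  fixes f :: "'a::real_inner \<Rightarrow> real"
  assumes lower: "\<And>w z. f w + inner (g w) (z - w) \<le> f z"
    and upper: "\<And>w z. f z \<le> f w + inner (g w) (z - w) + M / 2 * (norm (z - w))\<^sup>2"
    and M: "M > 0"
  shows "(norm (g y - g x))\<^sup>2 \<le> M * inner (g y - g x) (y - x)"
proof -
  have "(1 / M) * (norm (g y - g x))\<^sup>2 \<le> inner (g y - g x) (y - x)"
    using convex_smooth_gradient_gap[OF lower upper M, of x y]
      convex_smooth_gradient_gap[OF lower upper M, of y x]
    by (simp add: norm_minus_commute inner_diff_left inner_diff_right inner_commute field_simps)
  then show ?thesis
    using M by (simp add: field_simps)
qed

text \<open>\<open>f - \<mu>/2 |\<cdot>|\<^sup>2\<close> is convex with \<open>(L - \<mu>)\<close>-Lipschitz gradient.\<close>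

lemma strongly_convex_shifted_gradient_cocoercive:
  fixes f :: "'a::real_inner \<Rightarrow> real"
  assumes sc: "strongly_convex \<mu> f" and gd: "\<And>x. GDERIV f x :> g x"
    and lip: "\<And>x y. norm (g x - g y) \<le> L * norm (x - y)"
    and M: "M > 0" "L - \<mu> \<le> M"
  shows "(norm ((g v - g x) - \<mu> *\<^sub>R (v - x)))\<^sup>2 \<le> M * inner ((g v - g x) - \<mu> *\<^sub>R (v - x)) (v - x)"
proof -
  define \<psi> where "\<psi> z = f z - \<mu> / 2 * (norm z)\<^sup>2" for z
  define h where "h z = g z - \<mu> *\<^sub>R z" for z
  have quad: "\<mu> / 2 * (norm z)\<^sup>2 - \<mu> / 2 * (norm w)\<^sup>2 - \<mu> * inner w (z - w) = \<mu> / 2 * (norm (z - w))\<^sup>2"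
    for z w :: 'a
    by (simp add: power2_norm_diff inner_diff_right inner_commute dot_square_norm algebra_simps)
  have h_inner: "inner (h w) (z - w) = inner (g w) (z - w) - \<mu> * inner w (z - w)" for w z
    unfolding h_def by (simp add: inner_diff_left)
  have "\<psi> w + inner (h w) (z - w) \<le> \<psi> z" for w z
    using strongly_convex_lower_bound[OF sc gd, of w z] quad[of z w] h_inner[of w z]
    unfolding \<psi>_def by linarith
  moreover have "\<psi> z \<le> \<psi> w + inner (h w) (z - w) + M / 2 * (norm (z - w))\<^sup>2" for w z
  proof -
    have "(L - \<mu>) / 2 * (norm (z - w))\<^sup>2 \<le> M / 2 * (norm (z - w))\<^sup>2"
      using M by (intro mult_right_mono) auto
    then show ?thesis
      using Lipschitz_gradient_upper_bound[OF gd lip, of z w] quad[of z w] h_inner[of w z]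
      unfolding \<psi>_def by (simp add: left_diff_distrib diff_divide_distrib)
  qed
  ultimately have "(norm (h v - h x))\<^sup>2 \<le> M * inner (h v - h x) (v - x)"
    using M by (intro convex_smooth_gradient_cocoercive) auto
  moreover have "h v - h x = (g v - g x) - \<mu> *\<^sub>R (v - x)"
    unfolding h_def by (simp add: algebra_simps)
  ultimately show ?thesis
    by simp
qed

text \<open>Cocoercivity is only available for constants \<open>M > L - \<mu>\<close> (the case \<open>L = \<mu>\<close> needs
  \<open>M > 0\<close>), so the bound is obtained in the limit \<open>M \<rightarrow> L - \<mu>\<close>.\<close>

lemma strongly_convex_smooth_interpolation:
  fixes f :: "'a::euclidean_space \<Rightarrow> real"
  assumes sc: "strongly_convex \<mu> f" and gd: "\<And>x. GDERIV f x :> g x"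
    and lip: "\<And>x y. norm (g x - g y) \<le> L * norm (x - y)"
  shows "(L + \<mu>) * inner (v - x) (g v - g x) - (norm (g v - g x))\<^sup>2 - \<mu> * L * (norm (v - x))\<^sup>2 \<ge> 0"
proof -
  define u where "u = v - x"
  define c where "c = g v - g x"
  have "\<mu> \<le> L"
    by (rule strongly_convex_le_Lipschitz_constant[OF sc gd lip])
  have "\<forall>\<^sub>F M in at_right (L - \<mu>). (norm (c - \<mu> *\<^sub>R u))\<^sup>2 \<le> M * inner (c - \<mu> *\<^sub>R u) u"
    unfolding eventually_at_right_field
  proof (intro exI[of _ "L - \<mu> + 1"] conjI allI impI)
    fix M assume "L - \<mu> < M"
    with \<open>\<mu> \<le> L\<close> show "(norm (c - \<mu> *\<^sub>R u))\<^sup>2 \<le> M * inner (c - \<mu> *\<^sub>R u) u"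
      unfolding u_def c_def by (intro strongly_convex_shifted_gradient_cocoercive[OF sc gd lip]) auto
  qed simp
  then have "(norm (c - \<mu> *\<^sub>R u))\<^sup>2 \<le> (L - \<mu>) * inner (c - \<mu> *\<^sub>R u) u"
    by (intro tendsto_lowerbound[of "\<lambda>M. M * inner (c - \<mu> *\<^sub>R u) u"]) (auto intro!: tendsto_eq_intros)
  then have "(norm c)\<^sup>2 - 2 * \<mu> * inner u c + \<mu>\<^sup>2 * (norm u)\<^sup>2 \<le> (L - \<mu>) * (inner u c - \<mu> * (norm u)\<^sup>2)"
    by (simp add: power2_norm_diff inner_diff_left inner_diff_right inner_commute dot_square_norm power_mult_distrib)
  then show ?thesis
    unfolding u_def[symmetric] c_def[symmetric] by (simp add: algebra_simps power2_eq_square)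
qed

lemma smooth_gamma_sector_inequality:
  fixes f :: "'a::euclidean_space \<Rightarrow> real"
  assumes smooth: "smooth_C1 L f df"
    and cls: "(\<gamma> = - m \<and> strongly_convex m f) \<or> (\<gamma> = 0 \<and> convex_on UNIV f) \<or> \<gamma> = L"
  shows "(L - \<gamma>) * inner (v - x) (df v - df x) - (norm (df v - df x))\<^sup>2 + \<gamma> * L * (norm (v - x))\<^sup>2 \<ge> 0"
proof -
  have gd: "\<And>x. GDERIV f x :> df x" and lip: "\<And>x y. norm (df x - df y) \<le> L * norm (x - y)"
    using smooth unfolding smooth_C1_def by blast+
  from cls consider "\<gamma> = - m" "strongly_convex m f" | "\<gamma> = 0" "strongly_convex 0 f" | "\<gamma> = L"
    using convex_on_imp_strongly_convex_0 by blast
  then show ?thesis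
  proof cases
    case 1
    then show ?thesis
      using strongly_convex_smooth_interpolation[OF _ gd lip, of m v x] by simp
  next
    case 2
    then show ?thesis
      using strongly_convex_smooth_interpolation[OF _ gd lip, of 0 v x] by simp
  next
    case 3
    have "(norm (df v - df x))\<^sup>2 \<le> (L * norm (v - x))\<^sup>2"
      using lip[of v x] by (intro power_mono) auto
    with 3 show ?thesis
      by (simp add: power_mult_distrib power2_eq_square mult_ac)
  qed
qed

section \<open>The class \<open>S(m,L)\<close>\<close>

lemma GDERIV_unique:
  assumes "GDERIV f x :> D" "GDERIV f x :> E"
  shows "D = E"
proof -
  have "(\<lambda>h. inner h D) = (\<lambda>h. inner h E)"
    using has_derivative_unique assms unfolding gderiv_def by blast
  then have "inner (D - E) D = inner (D - E) E"
    by metis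
  then have "inner (D - E) (D - E) = 0"
    by (simp add: inner_diff_right)
  then show ?thesis
    by simp
qed

lemma GDERIV_mean:
  assumes "\<And>i. i < n \<Longrightarrow> GDERIV (f i) x :> df i x"
  shows "GDERIV (\<lambda>x. (1 / real n) * (\<Sum>i<n. f i x)) x :> mean n (\<lambda>i. df i x)"
proof -
  have "((\<lambda>x. (1 / real n) * (\<Sum>i<n. f i x)) has_derivative (\<lambda>h. (1 / real n) * (\<Sum>i<n. inner h (df i x)))) (at x)"
    using assms unfolding gderiv_def by (intro has_derivative_mult_right has_derivative_sum) auto
  then show ?thesis
    unfolding gderiv_def mean_def by (simp add: inner_sum_right)
qed

definition S_minimizer :: "real \<Rightarrow> real \<Rightarrow> ('a::real_inner \<Rightarrow> 'a) \<Rightarrow> 'a \<Rightarrow> bool" where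
  "S_minimizer m L G p \<longleftrightarrow> G p = 0 \<and> (\<forall>x. - 2 * m * L * (norm (x - p))\<^sup>2
      + 2 * (L + m) * inner (x - p) (G x) - 2 * (norm (G x))\<^sup>2 \<ge> 0)"

lemma in_S_unique_S_minimizer:
  assumes "in_S m L g" and "\<And>x. GDERIV g x :> G x"
  shows "\<exists>!p. S_minimizer m L G p"
proof -
  obtain dg where "\<And>x. GDERIV g x :> dg x" and "\<exists>!p. S_minimizer m L dg p"
    using assms(1) unfolding in_S_def S_minimizer_def by blast
  moreover from this(1) have "dg = G"
    using GDERIV_unique assms(2) by blast
  ultimately show ?thesis
    by simp
qed

lemma unique_S_minimizer_imp_Lipschitz_pos:
  fixes G :: "'a::euclidean_space \<Rightarrow> 'a"
  assumes uniq: "\<exists>!p. S_minimizer m L G p" and m: "m > 0"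
    and lip: "\<And>x y. norm (G x - G y) \<le> L * norm (x - y)"
  shows "L > 0"
proof (rule ccontr)
  assume "\<not> L > 0"
  obtain p where "S_minimizer m L G p"
    using uniq by blast
  then have "G p = 0"
    unfolding S_minimizer_def by blast
  have "L * norm (x - p) \<le> 0" for x
    using \<open>\<not> L > 0\<close> by (simp add: mult_nonpos_nonneg)
  then have "norm (G x - G p) \<le> 0" for x
    using lip[of x p] order_trans by blast
  then have "G x = 0" for x
    using \<open>G p = 0\<close> by simp
  moreover have "m * L * (norm (x - q))\<^sup>2 \<le> 0" for x q :: 'a
    using \<open>\<not> L > 0\<close> m by (intro mult_nonpos_nonneg mult_nonneg_nonpos) auto
  ultimately have "S_minimizer m L G q" for q
    unfolding S_minimizer_def by (auto simp: algebra_simps)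
  moreover obtain e :: 'a where "e \<in> Basis"
    using nonempty_Basis by blast
  ultimately show False
    using uniq nonzero_Basis by blast
qed

lemma S_minimizer_unique_stationary:
  assumes "S_minimizer m L G p" and "G xs = 0" and "m > 0" "L > 0"
  shows "xs = p"
proof -
  have "- 2 * m * L * (norm (xs - p))\<^sup>2 + 2 * (L + m) * inner (xs - p) (G xs) - 2 * (norm (G xs))\<^sup>2 \<ge> 0"
    using assms(1) unfolding S_minimizer_def by blast
  then have "m * L * (norm (xs - p))\<^sup>2 \<le> 0"
    using assms(2) by (simp add: mult_ac)
  then show ?thesis
    using assms(3,4) by (simp add: mult_le_0_iff)
qed

lemma in_S_sector_inequality:
  fixes g :: "'a::euclidean_space \<Rightarrow> real"
  assumes S: "in_S m L g" and gd: "\<And>x. GDERIV g x :> G x"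
    and stat: "G xs = 0" and m: "m > 0"
    and lip: "\<And>x y. norm (G x - G y) \<le> L * norm (x - y)"
  shows "- 2 * m * L * (norm (x - xs))\<^sup>2 + 2 * (L + m) * inner (x - xs) (G x) - 2 * (norm (G x))\<^sup>2 \<ge> 0"
proof -
  have uniq: "\<exists>!p. S_minimizer m L G p"
    by (rule in_S_unique_S_minimizer[OF S gd])
  then obtain p where p: "S_minimizer m L G p"
    by blast
  moreover have "xs = p"
    by (rule S_minimizer_unique_stationary[OF p stat m unique_S_minimizer_imp_Lipschitz_pos[OF uniq m lip]])
  ultimately show ?thesis
    unfolding S_minimizer_def by blast
qed

section \<open>One step of Finito\<close>

text \<open>The anchor after the step with index \<open>j\<close> differs from \<open>u - \<alpha> \<cdot> mean c\<close> by a term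
  with zero sum over \<open>j\<close>.\<close>

lemma finito_anchor_error_bound:
  fixes a b c :: "nat \<Rightarrow> 'a::real_inner"
  assumes n: "n \<ge> 1"
    and u: "u = mean n a - (\<alpha> * real n) *\<^sub>R mean n b"
    and P: "\<alpha>\<^sup>2 + P < 0"
  shows "(\<Sum>j<n. (norm (u + (1 / real n) *\<^sub>R (u - a j) - \<alpha> *\<^sub>R (c j - b j)))\<^sup>2)
           + P * (\<Sum>j<n. (norm (c j - mean n c))\<^sup>2)
         \<le> real n * (norm (u - \<alpha> *\<^sub>R mean n c))\<^sup>2
           + (1 - \<alpha>\<^sup>2 / (\<alpha>\<^sup>2 + P)) * (\<Sum>j<n. 2 / (real n)\<^sup>2 * (norm (a j - mean n a))\<^sup>2
                                          + 2 * \<alpha>\<^sup>2 * (norm (b j - mean n b))\<^sup>2)"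
proof -
  define q where "q = 1 - \<alpha>\<^sup>2 / (\<alpha>\<^sup>2 + P)"
  define z where "z j = (- (1 / real n)) *\<^sub>R (a j - mean n a) + \<alpha> *\<^sub>R (b j - mean n b)" for j
  define d where "d j = c j - mean n c" for j
  have "\<alpha>\<^sup>2 / (\<alpha>\<^sup>2 + P) \<le> 0"
    using P by (intro divide_nonneg_neg) auto
  then have "q \<ge> 0"
    unfolding q_def by simp
  have next_anchor: "u + (1 / real n) *\<^sub>R (u - a j) - \<alpha> *\<^sub>R (c j - b j)
      = (u - \<alpha> *\<^sub>R mean n c) + (z j - \<alpha> *\<^sub>R d j)" for j
    using n unfolding z_def d_def u by (simp add: algebra_simps)
  have "(\<Sum>j<n. z j - \<alpha> *\<^sub>R d j) = 0"
    using sum_diff_mean[OF n, of a] sum_diff_mean[OF n, of b] sum_diff_mean[OF n, of c]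
    unfolding z_def d_def by (simp add: sum.distrib sum_subtractf scaleR_sum_right[symmetric])
  then have "(\<Sum>j<n. (norm (u + (1 / real n) *\<^sub>R (u - a j) - \<alpha> *\<^sub>R (c j - b j)))\<^sup>2)
      = real n * (norm (u - \<alpha> *\<^sub>R mean n c))\<^sup>2 + (\<Sum>j<n. (norm (z j - \<alpha> *\<^sub>R d j))\<^sup>2)"
    unfolding next_anchor by (rule sum_power2_norm_add_centered)
  moreover have "(norm (z j - \<alpha> *\<^sub>R d j))\<^sup>2 + P * (norm (d j))\<^sup>2
      \<le> q * (2 / (real n)\<^sup>2 * (norm (a j - mean n a))\<^sup>2 + 2 * \<alpha>\<^sup>2 * (norm (b j - mean n b))\<^sup>2)" for j
  proof -
    have "(norm (z j))\<^sup>2 \<le> 2 / (real n)\<^sup>2 * (norm (a j - mean n a))\<^sup>2 + 2 * \<alpha>\<^sup>2 * (norm (b j - mean n b))\<^sup>2"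
      using power2_norm_add_le[of "(- (1 / real n)) *\<^sub>R (a j - mean n a)" "\<alpha> *\<^sub>R (b j - mean n b)"]
      unfolding z_def by (simp add: power_mult_distrib power_divide)
    then show ?thesis
      using power2_norm_diff_scaleR_le[OF P, of "z j" "d j"] mult_left_mono[OF _ \<open>q \<ge> 0\<close>]
      unfolding q_def by fastforce
  qed
  then have "(\<Sum>j<n. (norm (z j - \<alpha> *\<^sub>R d j))\<^sup>2) + P * (\<Sum>j<n. (norm (d j))\<^sup>2)
      \<le> q * (\<Sum>j<n. 2 / (real n)\<^sup>2 * (norm (a j - mean n a))\<^sup>2 + 2 * \<alpha>\<^sup>2 * (norm (b j - mean n b))\<^sup>2)"
    by (simp add: sum_distrib_left sum.distrib[symmetric] sum_mono)
  ultimately show ?thesis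
    unfolding q_def d_def by linarith
qed

text \<open>The multiplier \<open>\<lambda>\<^sub>1\<close> is attached to the \<open>S(m,L)\<close> constraint and \<open>\<lambda>\<^sub>2\<close> to the
  sum of the sector constraints; condition \<open>c4\<close> makes the resulting quadratic form nonpositive.\<close>

lemma finito_sector_bound:
  fixes c :: "nat \<Rightarrow> 'a::real_inner"
  assumes n: "n \<ge> 1"
    and S: "- 2 * m * L * (norm u)\<^sup>2 + 2 * (L + m) * inner u (mean n c) - 2 * (norm (mean n c))\<^sup>2 \<ge> 0"
    and T: "\<And>j. j < n \<Longrightarrow> (L - \<gamma>) * inner u (c j) - (norm (c j))\<^sup>2 + \<gamma> * L * (norm u)\<^sup>2 \<ge> 0"
    and lam: "lam1 \<ge> 0" "lam2 \<ge> 0"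
    and c1: "\<alpha>\<^sup>2 - 2 * lam2 + p1 < 0"
    and c4: "p4 - \<rho>\<^sup>2 + 2 * L * \<gamma> * lam2 - 2 * L * m * lam1 + 1
               - ((L + m) * lam1 + (L - \<gamma>) * lam2 - \<alpha>)\<^sup>2
                 / (\<alpha>\<^sup>2 - 2 * lam1 - 2 * lam2 + p1) \<le> 0"
  shows "real n * ((p4 - \<rho>\<^sup>2) * (norm u)\<^sup>2 + p1 * (norm (mean n c))\<^sup>2 + (norm (u - \<alpha> *\<^sub>R mean n c))\<^sup>2)
           + 2 * lam2 * (\<Sum>j<n. (norm (c j - mean n c))\<^sup>2) \<le> 0"
proof -
  define N where "N = real n"
  define cm where "cm = mean n c"
  define Cd where "Cd = (\<Sum>j<n. (norm (c j - cm))\<^sup>2)"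
  define Sx where "Sx = - 2 * m * L * (norm u)\<^sup>2 + 2 * (L + m) * inner u cm - 2 * (norm cm)\<^sup>2"
  define Tx where "Tx = (L - \<gamma>) * N * inner u cm - N * (norm cm)\<^sup>2 - Cd + N * \<gamma> * L * (norm u)\<^sup>2"
  define Mx where "Mx = (p4 - \<rho>\<^sup>2 + 2 * L * \<gamma> * lam2 - 2 * L * m * lam1 + 1) * (norm u)\<^sup>2
            + 2 * ((L + m) * lam1 + (L - \<gamma>) * lam2 - \<alpha>) * inner u cm
            + (\<alpha>\<^sup>2 - 2 * lam1 - 2 * lam2 + p1) * (norm cm)\<^sup>2"
  have "Mx \<le> 0"
    unfolding Mx_def using c1 c4 lam by (intro inner_quadratic_form_nonpos) (auto simp: field_simps)
  then have "N * Mx \<le> 0"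
    unfolding N_def by (simp add: mult_nonneg_nonpos)
  moreover have "lam1 * N * Sx \<ge> 0"
    using S lam unfolding Sx_def cm_def N_def by simp
  moreover have "Tx \<ge> 0"
  proof -
    have "0 \<le> (\<Sum>j<n. (L - \<gamma>) * inner u (c j) - (norm (c j))\<^sup>2 + \<gamma> * L * (norm u)\<^sup>2)"
      using T by (intro sum_nonneg) auto
    also have "\<dots> = (L - \<gamma>) * inner u (\<Sum>j<n. c j) - (\<Sum>j<n. (norm (c j))\<^sup>2) + N * \<gamma> * L * (norm u)\<^sup>2"
      unfolding N_def by (simp add: sum.distrib sum_subtractf inner_sum_right sum_distrib_left)
    finally show ?thesis
      using n sum_power2_norm_mean_decomp[OF n, of c]
      unfolding Tx_def Cd_def cm_def N_def by (simp add: sum_eq_scaleR_mean algebra_simps)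
  qed
  then have "lam2 * Tx \<ge> 0"
    using lam by simp
  moreover have uc: "(norm (u - \<alpha> *\<^sub>R cm))\<^sup>2 = (norm u)\<^sup>2 - 2 * \<alpha> * inner u cm + \<alpha>\<^sup>2 * (norm cm)\<^sup>2"
    by (simp add: power2_norm_diff power_mult_distrib)
  moreover have "N * ((p4 - \<rho>\<^sup>2) * (norm u)\<^sup>2 + p1 * (norm cm)\<^sup>2 + (norm (u - \<alpha> *\<^sub>R cm))\<^sup>2) + 2 * lam2 * Cd
      = N * Mx - lam1 * N * Sx - 2 * lam2 * Tx"
    unfolding Mx_def Sx_def Tx_def uc by (simp add: algebra_simps power2_eq_square)
  ultimately show ?thesis
    unfolding N_def cm_def Cd_def by linarith
qed

lemma finito_fluctuation_bound:
  fixes a b :: "nat \<Rightarrow> 'a::real_inner"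
  assumes n: "n \<ge> 1"
    and rho: "1 - 1 / real n \<le> \<rho>\<^sup>2"
    and p_pos: "p1 > 0" "p4 > 0"
    and c2: "real n * (1 - \<rho>\<^sup>2) * p1 - p1 + 2 * \<alpha>\<^sup>2
               - 2 * \<alpha> ^ 4 / (\<alpha>\<^sup>2 - 2 * lam2 + p1) \<le> 0"
    and c3: "real n * (1 - \<rho>\<^sup>2) * p4 - p4 + 2 / (real n)\<^sup>2
               - 2 * \<alpha>\<^sup>2 / ((real n)\<^sup>2 * (\<alpha>\<^sup>2 - 2 * lam2 + p1)) \<le> 0"
  shows "(real n - 1 - real n * \<rho>\<^sup>2) * (p4 * (\<Sum>i<n. (norm (a i))\<^sup>2) + p1 * (\<Sum>i<n. (norm (b i))\<^sup>2))
           + (1 - \<alpha>\<^sup>2 / (\<alpha>\<^sup>2 - 2 * lam2 + p1))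
             * (\<Sum>j<n. 2 / (real n)\<^sup>2 * (norm (a j - mean n a))\<^sup>2 + 2 * \<alpha>\<^sup>2 * (norm (b j - mean n b))\<^sup>2)
         \<le> 0"
proof -
  define N where "N = real n"
  define Au where "Au = (\<Sum>i<n. (norm (a i - mean n a))\<^sup>2)"
  define Bu where "Bu = (\<Sum>i<n. (norm (b i - mean n b))\<^sup>2)"
  define q where "q = 1 - \<alpha>\<^sup>2 / (\<alpha>\<^sup>2 - 2 * lam2 + p1)"
  define \<rho>' where "\<rho>' = N - 1 - N * \<rho>\<^sup>2"
  have "\<rho>' \<le> 0"
    using rho n unfolding \<rho>'_def N_def by (simp add: field_simps)
  have "(\<Sum>i<n. (norm (a i))\<^sup>2) \<ge> Au" "(\<Sum>i<n. (norm (b i))\<^sup>2) \<ge> Bu"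
    using sum_power2_norm_mean_decomp[OF n, of a] sum_power2_norm_mean_decomp[OF n, of b]
    unfolding Au_def Bu_def by simp_all
  with \<open>\<rho>' \<le> 0\<close> p_pos have "\<rho>' * (p4 * (\<Sum>i<n. (norm (a i))\<^sup>2) + p1 * (\<Sum>i<n. (norm (b i))\<^sup>2))
      \<le> \<rho>' * (p4 * Au + p1 * Bu)"
    by (intro mult_left_mono_neg add_mono mult_left_mono) auto
  moreover have "(p4 * \<rho>' + 2 / N\<^sup>2 * q) * Au \<le> 0"
  proof -
    have "p4 * \<rho>' + 2 / N\<^sup>2 * q \<le> 0"
      using c3 unfolding \<rho>'_def q_def N_def by (simp add: algebra_simps)
    then show ?thesis
      unfolding Au_def by (intro mult_nonpos_nonneg sum_nonneg) auto
  qed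
  moreover have "(p1 * \<rho>' + 2 * \<alpha>\<^sup>2 * q) * Bu \<le> 0"
  proof -
    have "p1 * \<rho>' + 2 * \<alpha>\<^sup>2 * q \<le> 0"
      using c2 unfolding \<rho>'_def q_def N_def by (simp add: algebra_simps power2_eq_square power4_eq_xxxx)
    then show ?thesis
      unfolding Bu_def by (intro mult_nonpos_nonneg sum_nonneg) auto
  qed
  moreover have "q * (\<Sum>j<n. 2 / N\<^sup>2 * (norm (a j - mean n a))\<^sup>2 + 2 * \<alpha>\<^sup>2 * (norm (b j - mean n b))\<^sup>2)
      = 2 / N\<^sup>2 * q * Au + 2 * \<alpha>\<^sup>2 * q * Bu"
    unfolding Au_def Bu_def by (simp add: sum.distrib sum_distrib_left algebra_simps)
  ultimately show ?thesis
    unfolding \<rho>'_def q_def[symmetric] N_def[symmetric] by (simp add: algebra_simps)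
qed

lemma finito_error_contraction:
  fixes a b c :: "nat \<Rightarrow> 'a::real_inner"
  assumes n: "n \<ge> 1"
    and u: "u = mean n a - (\<alpha> * real n) *\<^sub>R mean n b"
    and S: "- 2 * m * L * (norm u)\<^sup>2 + 2 * (L + m) * inner u (mean n c) - 2 * (norm (mean n c))\<^sup>2 \<ge> 0"
    and T: "\<And>j. j < n \<Longrightarrow> (L - \<gamma>) * inner u (c j) - (norm (c j))\<^sup>2 + \<gamma> * L * (norm u)\<^sup>2 \<ge> 0"
    and rho: "1 - 1 / real n \<le> \<rho>\<^sup>2"
    and p_pos: "p1 > 0" "p4 > 0"
    and lam: "lam1 \<ge> 0" "lam2 \<ge> 0"
    and c1: "\<alpha>\<^sup>2 - 2 * lam2 + p1 < 0"
    and c2: "real n * (1 - \<rho>\<^sup>2) * p1 - p1 + 2 * \<alpha>\<^sup>2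
               - 2 * \<alpha> ^ 4 / (\<alpha>\<^sup>2 - 2 * lam2 + p1) \<le> 0"
    and c3: "real n * (1 - \<rho>\<^sup>2) * p4 - p4 + 2 / (real n)\<^sup>2
               - 2 * \<alpha>\<^sup>2 / ((real n)\<^sup>2 * (\<alpha>\<^sup>2 - 2 * lam2 + p1)) \<le> 0"
    and c4: "p4 - \<rho>\<^sup>2 + 2 * L * \<gamma> * lam2 - 2 * L * m * lam1 + 1
               - ((L + m) * lam1 + (L - \<gamma>) * lam2 - \<alpha>)\<^sup>2
                 / (\<alpha>\<^sup>2 - 2 * lam1 - 2 * lam2 + p1) \<le> 0"
  shows "(\<Sum>j<n. p4 * ((\<Sum>i<n. (norm (a i))\<^sup>2) - (norm (a j))\<^sup>2 + (norm u)\<^sup>2)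
              + p1 * ((\<Sum>i<n. (norm (b i))\<^sup>2) - (norm (b j))\<^sup>2 + (norm (c j))\<^sup>2)
              + (norm (u + (1 / real n) *\<^sub>R (u - a j) - \<alpha> *\<^sub>R (c j - b j)))\<^sup>2)
         \<le> real n * \<rho>\<^sup>2 * (p4 * (\<Sum>i<n. (norm (a i))\<^sup>2) + p1 * (\<Sum>i<n. (norm (b i))\<^sup>2) + (norm u)\<^sup>2)"
proof -
  define N where "N = real n"
  define A where "A = (\<Sum>i<n. (norm (a i))\<^sup>2)"
  define B where "B = (\<Sum>i<n. (norm (b i))\<^sup>2)"
  define Cd where "Cd = (\<Sum>i<n. (norm (c i - mean n c))\<^sup>2)"
  define Z where "Z = (\<Sum>j<n. 2 / N\<^sup>2 * (norm (a j - mean n a))\<^sup>2 + 2 * \<alpha>\<^sup>2 * (norm (b j - mean n b))\<^sup>2)"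
  define SW where "SW = (\<Sum>j<n. (norm (u + (1 / real n) *\<^sub>R (u - a j) - \<alpha> *\<^sub>R (c j - b j)))\<^sup>2)"
  define q where "q = 1 - \<alpha>\<^sup>2 / (\<alpha>\<^sup>2 - 2 * lam2 + p1)"
  have "(\<Sum>j<n. p4 * (A - (norm (a j))\<^sup>2 + (norm u)\<^sup>2) + p1 * (B - (norm (b j))\<^sup>2 + (norm (c j))\<^sup>2)
              + (norm (u + (1 / real n) *\<^sub>R (u - a j) - \<alpha> *\<^sub>R (c j - b j)))\<^sup>2)
        = p4 * (N - 1) * A + p4 * N * (norm u)\<^sup>2 + p1 * (N - 1) * B
          + p1 * (N * (norm (mean n c))\<^sup>2 + Cd) + SW"
    using sum_power2_norm_mean_decomp[OF n, of c]
    unfolding SW_def A_def B_def Cd_def N_def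
    by (simp add: sum.distrib sum_subtractf sum_distrib_left[symmetric] algebra_simps)
  moreover have "SW + (p1 - 2 * lam2) * Cd \<le> N * (norm (u - \<alpha> *\<^sub>R mean n c))\<^sup>2 + q * Z"
    using finito_anchor_error_bound[OF n u, of "p1 - 2 * lam2" c] c1
    unfolding SW_def Cd_def Z_def q_def N_def by (simp add: algebra_simps)
  moreover have "N * ((p4 - \<rho>\<^sup>2) * (norm u)\<^sup>2 + p1 * (norm (mean n c))\<^sup>2
      + (norm (u - \<alpha> *\<^sub>R mean n c))\<^sup>2) + 2 * lam2 * Cd \<le> 0"
    unfolding N_def Cd_def by (rule finito_sector_bound[OF n S T lam c1 c4])
  moreover have "(N - 1 - N * \<rho>\<^sup>2) * (p4 * A + p1 * B) + q * Z \<le> 0"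
    unfolding A_def B_def q_def Z_def N_def by (rule finito_fluctuation_bound[OF n rho p_pos c2 c3])
  ultimately show ?thesis
    unfolding A_def[symmetric] B_def[symmetric] N_def[symmetric] by (simp add: algebra_simps)
qed

definition finito_anchor :: "nat \<Rightarrow> real \<Rightarrow> (nat \<Rightarrow> 'a) \<Rightarrow> (nat \<Rightarrow> 'a) \<Rightarrow> 'a::real_vector" where
  "finito_anchor n \<alpha> x y = (1 / real n) *\<^sub>R (\<Sum>i<n. x i) - \<alpha> *\<^sub>R (\<Sum>i<n. y i)"

lemma finito_step_eq:
  "finito_step n \<alpha> df (x, y) j
     = (x(j := finito_anchor n \<alpha> x y), y(j := df j (finito_anchor n \<alpha> x y)))"
  by (simp add: finito_step_def finito_anchor_def Let_def)

lemma lyap_eq: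
  "lyap n \<alpha> p1 p4 df xs (x, y)
     = p4 * (\<Sum>i<n. (norm (x i - xs))\<^sup>2) + p1 * (\<Sum>i<n. (norm (y i - df i xs))\<^sup>2)
       + (norm (finito_anchor n \<alpha> x y - xs))\<^sup>2"
  by (simp add: lyap_def finito_anchor_def Let_def)

lemma sum_lessThan_fun_upd:
  fixes F :: "nat \<Rightarrow> 'b \<Rightarrow> 'c::ab_group_add"
  assumes "j < n"
  shows "(\<Sum>i<n. F i ((g(j := w)) i)) = (\<Sum>i<n. F i (g i)) - F j (g j) + F j w"
proof -
  have j: "j \<in> {..<n}"
    using assms by simp
  have "(\<Sum>i<n. F i ((g(j := w)) i)) = F j w + (\<Sum>i\<in>{..<n} - {j}. F i (g i))"
    using sum.remove[OF finite_lessThan j, of "\<lambda>i. F i ((g(j := w)) i)"] by simp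
  also have "\<dots> = F j w + ((\<Sum>i<n. F i (g i)) - F j (g j))"
    using sum.remove[OF finite_lessThan j, of "\<lambda>i. F i (g i)"] by simp
  finally show ?thesis
    by simp
qed

lemma lyap_finito_step:
  fixes x y :: "nat \<Rightarrow> 'a::real_inner" and \<alpha> :: real
  assumes "j < n"
  defines "v \<equiv> finito_anchor n \<alpha> x y"
  shows "lyap n \<alpha> p1 p4 df xs (finito_step n \<alpha> df (x, y) j)
       = p4 * ((\<Sum>i<n. (norm (x i - xs))\<^sup>2) - (norm (x j - xs))\<^sup>2 + (norm (v - xs))\<^sup>2)
         + p1 * ((\<Sum>i<n. (norm (y i - df i xs))\<^sup>2) - (norm (y j - df j xs))\<^sup>2 + (norm (df j v - df j xs))\<^sup>2)
         + (norm (v + (1 / real n) *\<^sub>R (v - x j) - \<alpha> *\<^sub>R (df j v - y j) - xs))\<^sup>2"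
proof -
  have sx: "(\<Sum>i<n. (x(j := v)) i) = (\<Sum>i<n. x i) - x j + v"
    and sy: "(\<Sum>i<n. (y(j := df j v)) i) = (\<Sum>i<n. y i) - y j + df j v"
    using sum_lessThan_fun_upd[OF assms(1), of "\<lambda>i z. z"] by simp_all
  have "finito_anchor n \<alpha> (x(j := v)) (y(j := df j v))
      = v + (1 / real n) *\<^sub>R (v - x j) - \<alpha> *\<^sub>R (df j v - y j)"
    unfolding finito_anchor_def sx sy by (simp add: v_def finito_anchor_def algebra_simps)
  moreover have "(\<Sum>i<n. (norm ((x(j := v)) i - xs))\<^sup>2)
      = (\<Sum>i<n. (norm (x i - xs))\<^sup>2) - (norm (x j - xs))\<^sup>2 + (norm (v - xs))\<^sup>2"
    by (rule sum_lessThan_fun_upd[OF assms(1), of "\<lambda>i z. (norm (z - xs))\<^sup>2"])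
  moreover have "(\<Sum>i<n. (norm ((y(j := df j v)) i - df i xs))\<^sup>2)
      = (\<Sum>i<n. (norm (y i - df i xs))\<^sup>2) - (norm (y j - df j xs))\<^sup>2 + (norm (df j v - df j xs))\<^sup>2"
    by (rule sum_lessThan_fun_upd[OF assms(1), of "\<lambda>i z. (norm (z - df i xs))\<^sup>2"])
  ultimately show ?thesis
    unfolding finito_step_eq lyap_eq v_def[symmetric] by simp
qed

lemma finito_lyap_contraction:
  fixes df :: "nat \<Rightarrow> 'a::real_inner \<Rightarrow> 'a"
  assumes n: "n \<ge> 1"
    and stat: "mean n (\<lambda>i. df i xs) = 0"
    and S: "\<And>v. - 2 * m * L * (norm (v - xs))\<^sup>2 + 2 * (L + m) * inner (v - xs) (mean n (\<lambda>i. df i v))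
                - 2 * (norm (mean n (\<lambda>i. df i v)))\<^sup>2 \<ge> 0"
    and T: "\<And>i v. i < n \<Longrightarrow> (L - \<gamma>) * inner (v - xs) (df i v - df i xs) - (norm (df i v - df i xs))\<^sup>2
                + \<gamma> * L * (norm (v - xs))\<^sup>2 \<ge> 0"
    and rho: "1 - 1 / real n \<le> \<rho>\<^sup>2"
    and p_pos: "p1 > 0" "p4 > 0"
    and lam: "lam1 \<ge> 0" "lam2 \<ge> 0"
    and c1: "\<alpha>\<^sup>2 - 2 * lam2 + p1 < 0"
    and c2: "real n * (1 - \<rho>\<^sup>2) * p1 - p1 + 2 * \<alpha>\<^sup>2
               - 2 * \<alpha> ^ 4 / (\<alpha>\<^sup>2 - 2 * lam2 + p1) \<le> 0"
    and c3: "real n * (1 - \<rho>\<^sup>2) * p4 - p4 + 2 / (real n)\<^sup>2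
               - 2 * \<alpha>\<^sup>2 / ((real n)\<^sup>2 * (\<alpha>\<^sup>2 - 2 * lam2 + p1)) \<le> 0"
    and c4: "p4 - \<rho>\<^sup>2 + 2 * L * \<gamma> * lam2 - 2 * L * m * lam1 + 1
               - ((L + m) * lam1 + (L - \<gamma>) * lam2 - \<alpha>)\<^sup>2
                 / (\<alpha>\<^sup>2 - 2 * lam1 - 2 * lam2 + p1) \<le> 0"
  shows "(\<Sum>j<n. lyap n \<alpha> p1 p4 df xs (finito_step n \<alpha> df st j))
           \<le> real n * \<rho>\<^sup>2 * lyap n \<alpha> p1 p4 df xs st"
proof -
  obtain x y where st: "st = (x, y)"
    by (cases st)
  define v where "v = finito_anchor n \<alpha> x y"
  define a where "a i = x i - xs" for i
  define b where "b i = y i - df i xs" for i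
  define c where "c i = df i v - df i xs" for i
  have "mean n b = mean n y"
    using stat unfolding b_def mean_diff by simp
  then have u: "v - xs = mean n a - (\<alpha> * real n) *\<^sub>R mean n b"
    using n unfolding v_def a_def finito_anchor_def mean_diff
    by (simp add: sum_eq_scaleR_mean mean_def[of n "\<lambda>i. xs"] sum_constant_scaleR)
  have "mean n c = mean n (\<lambda>i. df i v)"
    using stat unfolding c_def mean_diff by simp
  have "(\<Sum>j<n. lyap n \<alpha> p1 p4 df xs (finito_step n \<alpha> df st j))
      = (\<Sum>j<n. p4 * ((\<Sum>i<n. (norm (a i))\<^sup>2) - (norm (a j))\<^sup>2 + (norm (v - xs))\<^sup>2)
              + p1 * ((\<Sum>i<n. (norm (b i))\<^sup>2) - (norm (b j))\<^sup>2 + (norm (c j))\<^sup>2)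
              + (norm ((v - xs) + (1 / real n) *\<^sub>R ((v - xs) - a j) - \<alpha> *\<^sub>R (c j - b j)))\<^sup>2)"
    unfolding st a_def b_def c_def v_def
    by (intro sum.cong refl) (simp add: lyap_finito_step algebra_simps)
  also have "\<dots> \<le> real n * \<rho>\<^sup>2 * (p4 * (\<Sum>i<n. (norm (a i))\<^sup>2) + p1 * (\<Sum>i<n. (norm (b i))\<^sup>2) + (norm (v - xs))\<^sup>2)"
    using S[of v] T[of _ v] \<open>mean n c = mean n (\<lambda>i. df i v)\<close> unfolding c_def
    by (intro finito_error_contraction[OF n u _ _ rho p_pos lam c1 c2 c3 c4]) auto
  also have "\<dots> = real n * \<rho>\<^sup>2 * lyap n \<alpha> p1 p4 df xs st"
    unfolding st lyap_eq a_def b_def v_def ..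
  finally show ?thesis .
qed

section \<open>Expectation over uniform index sequences\<close>

lemma sum_lists_length_Suc:
  fixes F :: "nat list \<Rightarrow> 'a::comm_monoid_add"
  shows "(\<Sum>js\<in>{js. length js = Suc k \<and> set js \<subseteq> {..<n}}. F js)
           = (\<Sum>js\<in>{js. length js = k \<and> set js \<subseteq> {..<n}}. \<Sum>j<n. F (js @ [j]))"
proof -
  let ?Lk = "{js. length js = k \<and> set js \<subseteq> {..<n}}"
  have "{js. length js = Suc k \<and> set js \<subseteq> {..<n}} = (\<lambda>(js, j). js @ [j]) ` (?Lk \<times> {..<n})"
  proof (intro equalityI subsetI)
    fix js assume js: "js \<in> {js. length js = Suc k \<and> set js \<subseteq> {..<n}}"
    then have "js \<noteq> []"
      by auto
    moreover have "last js < n"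
      using js last_in_set[OF \<open>js \<noteq> []\<close>] by auto
    ultimately show "js \<in> (\<lambda>(js, j). js @ [j]) ` (?Lk \<times> {..<n})"
      using js by (auto dest: in_set_butlastD intro!: image_eqI[of _ _ "(butlast js, last js)"])
  qed auto
  moreover have "inj_on (\<lambda>(js, j). js @ [j]) (?Lk \<times> {..<n})"
    by (auto simp: inj_on_def)
  moreover have "finite ?Lk"
    using finite_lists_length_eq[OF finite_lessThan[of n], of k] by (simp add: conj_commute)
  ultimately show ?thesis
    by (simp add: sum.reindex sum.cartesian_product split_def)
qed

lemma expect_uniform_foldl_le:
  assumes n: "n \<ge> 1" and r: "r \<ge> 0"
    and step: "\<And>st. (\<Sum>j<n. V (f st j)) \<le> real n * r * V st"
  shows "expect_uniform n k (\<lambda>js. V (foldl f st0 js)) \<le> r ^ k * V st0"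
proof (induction k)
  case 0
  have "{js. length js = 0 \<and> set js \<subseteq> {..<n}} = {[]}"
    by auto
  then show ?case
    unfolding expect_uniform_def by simp
next
  case (Suc k)
  let ?Lk = "{js. length js = k \<and> set js \<subseteq> {..<n}}"
  have "(\<Sum>js\<in>{js. length js = Suc k \<and> set js \<subseteq> {..<n}}. V (foldl f st0 js))
      = (\<Sum>js\<in>?Lk. \<Sum>j<n. V (f (foldl f st0 js) j))"
    by (simp add: sum_lists_length_Suc)
  also have "\<dots> \<le> (\<Sum>js\<in>?Lk. real n * r * V (foldl f st0 js))"
    by (intro sum_mono step)
  finally have "expect_uniform n (Suc k) (\<lambda>js. V (foldl f st0 js))
      \<le> r * expect_uniform n k (\<lambda>js. V (foldl f st0 js))"
    using n unfolding expect_uniform_def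
    by (simp add: sum_distrib_left[symmetric] divide_right_mono field_simps)
  also have "\<dots> \<le> r * (r ^ k * V st0)"
    using Suc.IH r by (rule mult_left_mono)
  finally show ?case
    by simp
qed

theorem corollary4:
  fixes n :: nat and f :: "nat \<Rightarrow> 'a::euclidean_space \<Rightarrow> real" and df :: "nat \<Rightarrow> 'a \<Rightarrow> 'a"
    and L m \<gamma> \<alpha> \<rho> p1 p4 lam1 lam2 :: real and xs :: 'a
    and x0 y0 :: "nat \<Rightarrow> 'a" and k :: nat
  assumes n: "n \<ge> 1"
    and smooth: "\<And>i. i < n \<Longrightarrow> smooth_C1 L (f i) (df i)"
    and m_pos: "m > 0"
    and gS: "in_S m L (\<lambda>x. (1 / real n) * (\<Sum>i<n. f i x))"
    and xs: "(1 / real n) *\<^sub>R (\<Sum>i<n. df i xs) = 0"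
    and gamma: "(\<gamma> = - m \<and> (\<forall>i<n. strongly_convex m (f i)))
              \<or> (\<gamma> = 0 \<and> (\<forall>i<n. convex_on UNIV (f i)))
              \<or> \<gamma> = L"
    and alpha: "\<alpha> > 0"
    and rho: "1 - 1 / real n \<le> \<rho>\<^sup>2" "\<rho>\<^sup>2 \<le> 1"
    and p_pos: "p1 > 0" "p4 > 0"
    and lam: "lam1 \<ge> 0" "lam2 \<ge> 0"
    and c1: "\<alpha>\<^sup>2 - 2 * lam2 + p1 < 0"
    and c2: "real n * (1 - \<rho>\<^sup>2) * p1 - p1 + 2 * \<alpha>\<^sup>2
               - 2 * \<alpha> ^ 4 / (\<alpha>\<^sup>2 - 2 * lam2 + p1) \<le> 0"
    and c3: "real n * (1 - \<rho>\<^sup>2) * p4 - p4 + 2 / (real n)\<^sup>2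
               - 2 * \<alpha>\<^sup>2 / ((real n)\<^sup>2 * (\<alpha>\<^sup>2 - 2 * lam2 + p1)) \<le> 0"
    and c4: "p4 - \<rho>\<^sup>2 + 2 * L * \<gamma> * lam2 - 2 * L * m * lam1 + 1
               - ((L + m) * lam1 + (L - \<gamma>) * lam2 - \<alpha>)\<^sup>2
                 / (\<alpha>\<^sup>2 - 2 * lam1 - 2 * lam2 + p1) \<le> 0"
  shows "expect_uniform n k (\<lambda>js. lyap n \<alpha> p1 p4 df xs (finito n \<alpha> df (x0, y0) js))
           \<le> (\<rho>\<^sup>2) ^ k * lyap n \<alpha> p1 p4 df xs (x0, y0)"
proof -
  have gd: "\<And>i x. i < n \<Longrightarrow> GDERIV (f i) x :> df i x"
    and lip: "\<And>i x y. i < n \<Longrightarrow> norm (df i x - df i y) \<le> L * norm (x - y)"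
    using smooth unfolding smooth_C1_def by blast+
  have S: "- 2 * m * L * (norm (v - xs))\<^sup>2 + 2 * (L + m) * inner (v - xs) (mean n (\<lambda>i. df i v))
      - 2 * (norm (mean n (\<lambda>i. df i v)))\<^sup>2 \<ge> 0" for v
    using gS GDERIV_mean[OF gd] xs m_pos mean_Lipschitz[OF n lip]
    unfolding mean_def[symmetric] by (rule in_S_sector_inequality)
  have T: "(L - \<gamma>) * inner (v - xs) (df i v - df i xs) - (norm (df i v - df i xs))\<^sup>2
      + \<gamma> * L * (norm (v - xs))\<^sup>2 \<ge> 0" if "i < n" for i v
    using gamma that by (intro smooth_gamma_sector_inequality[OF smooth[OF that]]) blast
  have "(\<Sum>j<n. lyap n \<alpha> p1 p4 df xs (finito_step n \<alpha> df st j)) \<le> real n * \<rho>\<^sup>2 * lyap n \<alpha> p1 p4 df xs st"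
    for st
    using xs unfolding mean_def[symmetric]
    by (rule finito_lyap_contraction[OF n _ S T rho(1) p_pos lam c1 c2 c3 c4])
  then show ?thesis
    unfolding finito_def using n by (intro expect_uniform_foldl_le) auto
qed

end
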